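(* Consider a Fisher market with $n$ buyers and $m$ items, each item having supply $1$, in which every buyer values every item at $v_{ij}=1$. Buyer $i$ has a hard demand $d_i\ge 0$ and budget $B_i$. Assume there exists an allocation $x\ge 0$ with $\sum_i x_{ij}\le 1$ for all $j$ and $\sum_j x_{ij}-d_i>0$ for all $i$. Let $x$ be an optimal solution of $$\max_{x\ge 0}\sum_i B_i\log\Big(\sum_j x_{ij}-d_i\Big)\quad\text{s.t.}\quad \sum_i x_{ij}\le 1\ \ \forall j.$$ (i) If $B_i=1$ for all buyers $i$, then the difference $\sum_j x_{ij}-d_i$ is the same for all buyers $i$. (ii) If $B_i=d_i>0$ for all buyers $i$, then the ratio $\frac{\sum_j x_{ij}}{d_i}$ is the same for all buyers $i$. *)

theory Defs
  imports Complex_Main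
begin

text \<open>Fisher market with n buyers (indices i < n) and m items (indices j < m),
  unit supplies, all valuations v_ij = 1. An allocation is x :: nat => nat => real,
  x i j = amount of item j given to buyer i.\<close>

definition feasible_alloc :: "nat \<Rightarrow> nat \<Rightarrow> (nat \<Rightarrow> nat \<Rightarrow> real) \<Rightarrow> bool" where
  "feasible_alloc n m x \<longleftrightarrow>
     (\<forall>i<n. \<forall>j<m. x i j \<ge> 0) \<and> (\<forall>j<m. (\<Sum>i<n. x i j) \<le> 1)"

definition surplus :: "nat \<Rightarrow> (nat \<Rightarrow> nat \<Rightarrow> real) \<Rightarrow> (nat \<Rightarrow> real) \<Rightarrow> nat \<Rightarrow> real" where
  "surplus m x d i = (\<Sum>j<m. x i j) - d i"

text \<open>Effective domain of the objective: feasible and all logs defined (arguments > 0).\<close>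
definition objective_domain :: "nat \<Rightarrow> nat \<Rightarrow> (nat \<Rightarrow> real) \<Rightarrow> (nat \<Rightarrow> nat \<Rightarrow> real) \<Rightarrow> bool" where
  "objective_domain n m d x \<longleftrightarrow> feasible_alloc n m x \<and> (\<forall>i<n. surplus m x d i > 0)"

definition objective :: "nat \<Rightarrow> nat \<Rightarrow> (nat \<Rightarrow> real) \<Rightarrow> (nat \<Rightarrow> real) \<Rightarrow> (nat \<Rightarrow> nat \<Rightarrow> real) \<Rightarrow> real" where
  "objective n m B d x = (\<Sum>i<n. B i * ln (surplus m x d i))"

definition optimal_alloc :: "nat \<Rightarrow> nat \<Rightarrow> (nat \<Rightarrow> real) \<Rightarrow> (nat \<Rightarrow> real) \<Rightarrow> (nat \<Rightarrow> nat \<Rightarrow> real) \<Rightarrow> bool" where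
  "optimal_alloc n m B d x \<longleftrightarrow> objective_domain n m d x \<and>
     (\<forall>y. objective_domain n m d y \<longrightarrow> objective n m B d y \<le> objective n m B d x)"

end

theory Submission
  imports Defs
begin

text \<open>At an optimum the weighted marginal utilities \<open>B\<^sub>i / (\<Sum>\<^sub>j x\<^sub>i\<^sub>j - d\<^sub>i)\<close>
  all coincide: if buyer \<open>i\<close> had a larger one than buyer \<open>k\<close>, handing a small share of
  \<open>k\<close>'s bundle to \<open>i\<close> would keep the allocation feasible and strictly increase the
  objective, because the derivative of the objective along this transfer is the
  difference of the two marginal utilities. For \<open>B\<^sub>i = 1\<close> equal marginal utilities mean
  equal surpluses; for \<open>B\<^sub>i = d\<^sub>i\<close> they mean equal ratios \<open>\<Sum>\<^sub>j x\<^sub>i\<^sub>j / d\<^sub>i\<close>.\<close>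

lemma weighted_log_transfer_eventually_increases:
  fixes a b p q :: real
  assumes "0 < a" "0 < b" "q / b < p / a"
  shows "\<forall>\<^sub>F \<delta> in at_right 0. p * ln a + q * ln b < p * ln (a + \<delta>) + q * ln (b - \<delta>)"
proof -
  define \<phi> where "\<phi> \<delta> = p * ln (a + \<delta>) + q * ln (b - \<delta>)" for \<delta> :: real
  have "DERIV \<phi> 0 :> p / a - q / b"
    unfolding \<phi>_def
    by (rule derivative_eq_intros refl | use assms in \<open>simp add: field_simps\<close>)+
  then obtain e where "e > 0" "\<forall>h>0. h < e \<longrightarrow> \<phi> 0 < \<phi> (0 + h)"
    using DERIV_pos_inc_right assms(3) by (metis diff_gt_0_iff_gt)
  then show ?thesis
    unfolding eventually_at_right_field \<phi>_def by auto
qed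

definition transfer_share :: "nat \<Rightarrow> nat \<Rightarrow> real \<Rightarrow> (nat \<Rightarrow> nat \<Rightarrow> real) \<Rightarrow> nat \<Rightarrow> nat \<Rightarrow> real"
  where "transfer_share i k t x = (\<lambda>a j. x a j + (if a = i then t * x k j else 0)
                                               - (if a = k then t * x k j else 0))"

lemma surplus_transfer_share:
  "surplus m (transfer_share i k t x) d a =
     surplus m x d a + (if a = i then t * (\<Sum>j<m. x k j) else 0)
                     - (if a = k then t * (\<Sum>j<m. x k j) else 0)"
  by (auto simp: surplus_def transfer_share_def sum.distrib sum_subtractf sum_distrib_left)

lemma feasible_alloc_transfer_share:
  assumes "feasible_alloc n m x" "i < n" "k < n" "0 \<le> t" "t \<le> 1"
  shows "feasible_alloc n m (transfer_share i k t x)"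
  unfolding feasible_alloc_def
proof (intro conjI allI impI)
  fix a j assume "a < n" "j < m"
  then have "0 \<le> x a j" "0 \<le> x k j"
    using assms(1,3) by (auto simp: feasible_alloc_def)
  moreover have "t * x k j \<le> x k j"
    using \<open>0 \<le> x k j\<close> assms(4,5) by (simp add: mult_left_le_one_le)
  ultimately show "0 \<le> transfer_share i k t x a j"
    using assms(4) by (auto simp: transfer_share_def)
next
  fix j assume "j < m"
  have "(\<Sum>a<n. transfer_share i k t x a j) = (\<Sum>a<n. x a j)"
    using assms(2,3) by (simp add: transfer_share_def sum.distrib sum_subtractf)
  then show "(\<Sum>a<n. transfer_share i k t x a j) \<le> 1"
    using assms(1) \<open>j < m\<close> by (simp add: feasible_alloc_def)
qed

lemma objective_change_at_two_buyers:
  assumes "i < n" "k < n" "i \<noteq> k"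
    and "\<And>a. a < n \<Longrightarrow> a \<noteq> i \<Longrightarrow> a \<noteq> k \<Longrightarrow> surplus m y d a = surplus m x d a"
  shows "objective n m B d y =
           objective n m B d x
           + (B i * ln (surplus m y d i) - B i * ln (surplus m x d i))
           + (B k * ln (surplus m y d k) - B k * ln (surplus m x d k))"
proof -
  have "objective n m B d y =
          (\<Sum>a<n. B a * ln (surplus m x d a)
             + (if a = i then B i * ln (surplus m y d i) - B i * ln (surplus m x d i) else 0)
             + (if a = k then B k * ln (surplus m y d k) - B k * ln (surplus m x d k) else 0))"
    unfolding objective_def using assms by (intro sum.cong) auto
  also have "\<dots> = objective n m B d x
           + (B i * ln (surplus m y d i) - B i * ln (surplus m x d i))
           + (B k * ln (surplus m y d k) - B k * ln (surplus m x d k))"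
    using assms(1-3) by (simp add: objective_def sum.distrib)
  finally show ?thesis .
qed

lemma optimal_alloc_marginal_utility_le:
  assumes opt: "optimal_alloc n m B d x"
    and "i < n" "k < n" "0 \<le> d k"
  shows "B i / surplus m x d i \<le> B k / surplus m x d k"
proof (rule ccontr)
  assume neg: "\<not> ?thesis"
  define ui where "ui = surplus m x d i"
  define uk where "uk = surplus m x d k"
  define sk where "sk = (\<Sum>j<m. x k j)"
  have dom: "objective_domain n m d x"
    using opt by (simp add: optimal_alloc_def)
  have "i \<noteq> k" "B k / uk < B i / ui"
    using neg by (auto simp: ui_def uk_def)
  have "0 < ui" "0 < uk"
    using dom \<open>i < n\<close> \<open>k < n\<close> by (simp_all add: objective_domain_def ui_def uk_def)
  have "uk \<le> sk"
    using \<open>0 \<le> d k\<close> by (simp add: uk_def sk_def surplus_def)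
  have "\<forall>\<^sub>F \<delta> in at_right 0. 0 < \<delta> \<and> \<delta> < uk"
    unfolding eventually_at_right_field using \<open>0 < uk\<close> by blast
  moreover note weighted_log_transfer_eventually_increases[OF \<open>0 < ui\<close> \<open>0 < uk\<close> \<open>B k / uk < B i / ui\<close>]
  ultimately obtain \<delta> where \<delta>: "0 < \<delta>" "\<delta> < uk"
      and gain: "B i * ln ui + B k * ln uk < B i * ln (ui + \<delta>) + B k * ln (uk - \<delta>)"
    using eventually_happens'[OF trivial_limit_at_right_real eventually_conj] by blast
  \<comment> \<open>Since \<open>\<delta> < uk \<le> sk\<close>, the share \<open>\<delta> / sk\<close> of \<open>k\<close>'s bundle is at most \<open>1\<close>.\<close>
  define y where "y = transfer_share i k (\<delta> / sk) x"
  have "0 < sk"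
    using \<delta> \<open>uk \<le> sk\<close> by linarith
  have surplus_y: "surplus m y d a =
      surplus m x d a + (if a = i then \<delta> else 0) - (if a = k then \<delta> else 0)" for a
    using \<open>0 < sk\<close> by (simp add: y_def surplus_transfer_share sk_def)
  have "objective_domain n m d y"
    unfolding objective_domain_def
  proof (intro conjI allI impI)
    show "feasible_alloc n m y"
      unfolding y_def
      using dom \<open>i < n\<close> \<open>k < n\<close> \<delta> \<open>0 < sk\<close> \<open>uk \<le> sk\<close>
      by (intro feasible_alloc_transfer_share) (auto simp: objective_domain_def)
  next
    fix a assume "a < n"
    then show "0 < surplus m y d a"
      using dom \<delta> \<open>i \<noteq> k\<close> by (auto simp: surplus_y objective_domain_def uk_def)
  qed
  then have "objective n m B d y \<le> objective n m B d x"
    using opt by (simp add: optimal_alloc_def)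
  moreover have "objective n m B d y =
      objective n m B d x + (B i * ln (ui + \<delta>) - B i * ln ui) + (B k * ln (uk - \<delta>) - B k * ln uk)"
    using objective_change_at_two_buyers[of i n k m y d x B] \<open>i < n\<close> \<open>k < n\<close> \<open>i \<noteq> k\<close>
    by (simp add: surplus_y ui_def uk_def)
  ultimately show False
    using gain by linarith
qed

lemma optimal_alloc_marginal_utility_eq:
  assumes "optimal_alloc n m B d x" "i < n" "k < n" "0 \<le> d i" "0 \<le> d k"
  shows "B i / surplus m x d i = B k / surplus m x d k"
  using optimal_alloc_marginal_utility_le[OF assms(1-3,5)] optimal_alloc_marginal_utility_le[OF assms(1,3,2,4)]
  by linarith

theorem proposition1:
  fixes n m :: nat and B d :: "nat \<Rightarrow> real" and x :: "nat \<Rightarrow> nat \<Rightarrow> real"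
  assumes d_nonneg: "\<forall>i<n. d i \<ge> 0"
    and strictly_feasible: "\<exists>y. feasible_alloc n m y \<and> (\<forall>i<n. surplus m y d i > 0)"
    and opt: "optimal_alloc n m B d x"
  shows "((\<forall>i<n. B i = 1) \<longrightarrow> (\<forall>i<n. \<forall>k<n. surplus m x d i = surplus m x d k))
       \<and> ((\<forall>i<n. B i = d i \<and> d i > 0) \<longrightarrow>
            (\<forall>i<n. \<forall>k<n. (\<Sum>j<m. x i j) / d i = (\<Sum>j<m. x k j) / d k))"
proof (intro conjI impI allI)
  fix i k assume "\<forall>i<n. B i = 1" "i < n" "k < n"
  then have "1 / surplus m x d i = 1 / surplus m x d k"
    using optimal_alloc_marginal_utility_eq[OF opt \<open>i < n\<close> \<open>k < n\<close>] d_nonneg by simp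
  then show "surplus m x d i = surplus m x d k"
    by simp
next
  fix i k assume "\<forall>i<n. B i = d i \<and> d i > 0" "i < n" "k < n"
  then have "B i = d i" "B k = d k" "0 < d i" "0 < d k"
    by auto
  have "d i / surplus m x d i = d k / surplus m x d k"
    using optimal_alloc_marginal_utility_eq[OF opt \<open>i < n\<close> \<open>k < n\<close>] \<open>0 < d i\<close> \<open>0 < d k\<close>
      \<open>B i = d i\<close> \<open>B k = d k\<close> by simp
  then have "surplus m x d i / d i = surplus m x d k / d k"
    by (metis inverse_divide)
  then show "(\<Sum>j<m. x i j) / d i = (\<Sum>j<m. x k j) / d k"
    using \<open>0 < d i\<close> \<open>0 < d k\<close> by (simp add: surplus_def diff_divide_distrib)
qed

end
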